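(* Let $U$ be an $n$-qubit Clifford circuit, $L$ a finite set of its wires, and $B\in\mathbb{F}_2^{3|L|\times 2n}$ the back-propagator matrix of $L$. Let $S$ be a stabilizer group on $n$ qubits (an abelian group of $n$-qubit Pauli operators not containing $-I$) with generators $g_1,\dots,g_r$; let $T\in\mathbb{F}_2^{r\times 2n}$ be the matrix whose rows are the binary encodings of $g_1,\dots,g_r$, and let $N$ be a matrix whose columns form a basis of $\{v\in\mathbb{F}_2^{2n}: Tv=0\}$. Then the number of assignments $w\mapsto P_w\in\{I,X,Y,Z\}$, $w\in L$, such that $\prod_{w\in L}B(P_w,w)\in\{cs: c\in\{\pm1,\pm i\},\ s\in S\}$ equals $2^{\,2|L|-\operatorname{rk}_{\mathbb{F}_2}(BN)}$.
   Context: An $n$-qubit Clifford circuit $U$ is a finite sequence of Clifford gates on $n$ qubits. Its directed acyclic graph has the gates as vertices, augmented by one dummy input vertex and one dummy output vertex per qubit, and a directed edge for each input/output relation between gates; these edges are called wires. Each wire $w$ carries a definite qubit $q(w)$. For a wire $w$, write $U=B_wA_w$, where $A_w$ is the product of the gates preceding $w$ in a topological ordering of the DAG and $B_w$ the product of the remaining gates. For $P\in\{X,Y,Z\}$, $P_w$ denotes the $n$-qubit Pauli acting as $P$ on qubit $q(w)$ and as identity elsewhere. The back-propagator is the $n$-qubit Pauli operator $B(P,w)=A_w^\dagger P_wA_w$; set $B(I,w)=I$. Each $n$-qubit Pauli operator, up to phase, is encoded as its binary symplectic vector in $\mathbb{F}_2^{2n}$; products of Paulis correspond to sums of encodings. The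 back-propagator matrix of $L$ is the matrix $B\in\mathbb{F}_2^{3|L|\times 2n}$ whose rows are indexed by $(P,w)\in\{X,Y,Z\}\times L$, the $(P,w)$ row being the encoding of $B(P,w)$. *)

theory Defs
  imports "Jordan_Normal_Form.DL_Rank" "HOL-Library.Z2" "HOL-Library.FuncSet" "HOL-Library.Product_Lexorder"
begin

datatype pauli1 = PI | PX | PY | PZ

text \<open>Product of single-qubit Paulis: mult1 a b = (k, c) means a*b = i^k c.\<close>
fun mult1 :: "pauli1 \<Rightarrow> pauli1 \<Rightarrow> nat \<times> pauli1" where
  "mult1 PI b = (0, b)"
| "mult1 a PI = (0, a)"
| "mult1 PX PX = (0, PI)" | "mult1 PY PY = (0, PI)" | "mult1 PZ PZ = (0, PI)"
| "mult1 PX PY = (1, PZ)" | "mult1 PY PX = (3, PZ)"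
| "mult1 PY PZ = (1, PX)" | "mult1 PZ PY = (3, PX)"
| "mult1 PZ PX = (1, PY)" | "mult1 PX PZ = (3, PY)"

text \<open>An n-qubit Pauli operator i^k (P_0 \<otimes> ... \<otimes> P_{n-1}) is the pair (k, P).\<close>
type_synonym pauli = "nat \<times> (nat \<Rightarrow> pauli1)"

definition is_pauli :: "nat \<Rightarrow> pauli \<Rightarrow> bool" where
  "is_pauli n p \<longleftrightarrow> fst p < 4 \<and> (\<forall>q\<ge>n. snd p q = PI)"

definition pmul :: "nat \<Rightarrow> pauli \<Rightarrow> pauli \<Rightarrow> pauli" where
  "pmul n p p' = ((fst p + fst p' + (\<Sum>q<n. fst (mult1 (snd p q) (snd p' q)))) mod 4,
                  (\<lambda>q. if q < n then snd (mult1 (snd p q) (snd p' q)) else PI))"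

definition pscalar :: "nat \<Rightarrow> pauli" where
  "pscalar k = (k mod 4, (\<lambda>_. PI))"

definition pid :: pauli where "pid = pscalar 0"

definition psingle :: "nat \<Rightarrow> pauli1 \<Rightarrow> pauli" where
  "psingle q a = (0, (\<lambda>q'. if q' = q then a else PI))"

definition supported_on :: "nat set \<Rightarrow> pauli \<Rightarrow> bool" where
  "supported_on Q p \<longleftrightarrow> (\<forall>q. q \<notin> Q \<longrightarrow> snd p q = PI)"

text \<open>A Clifford gate G acting on the qubit set gqubits is represented by its (Heisenberg)
  conjugation action gheis P = adj(G) P G on the n-qubit Pauli group.  Such an action is exactly
  an automorphism of the Pauli group fixing the scalars and acting only on the qubits of the gate.\<close>
record gate =
  gqubits :: "nat set"
  gheis :: "pauli \<Rightarrow> pauli"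

definition clifford_gate :: "nat \<Rightarrow> gate \<Rightarrow> bool" where
  "clifford_gate n g \<longleftrightarrow>
     gqubits g \<subseteq> {..<n} \<and>
     bij_betw (gheis g) {p. is_pauli n p} {p. is_pauli n p} \<and>
     (\<forall>p p'. is_pauli n p \<longrightarrow> is_pauli n p' \<longrightarrow>
        gheis g (pmul n p p') = pmul n (gheis g p) (gheis g p')) \<and>
     (\<forall>k. gheis g (pscalar k) = pscalar k) \<and>
     (\<forall>p. is_pauli n p \<longrightarrow> supported_on (- gqubits g) p \<longrightarrow> gheis g p = p) \<and>
     (\<forall>p. is_pauli n p \<longrightarrow> supported_on (gqubits g) p \<longrightarrow> supported_on (gqubits g) (gheis g p))"

definition clifford_circuit :: "nat \<Rightarrow> gate list \<Rightarrow> bool" where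
  "clifford_circuit n U \<longleftrightarrow> (\<forall>g\<in>set U. clifford_gate n g)"

definition gates_on :: "gate list \<Rightarrow> nat \<Rightarrow> nat list" where
  "gates_on U q = filter (\<lambda>k. q \<in> gqubits (U ! k)) [0..<length U]"

text \<open>Wires of the DAG: the wire (q, j) on qubit q is the edge leaving the j-th vertex on
  qubit q (j = 0: the dummy input vertex; j \<ge> 1: the j-th gate acting on q) and entering the
  next one (the next gate on q or the dummy output vertex).\<close>
definition wires :: "nat \<Rightarrow> gate list \<Rightarrow> (nat \<times> nat) set" where
  "wires n U = {(q, j). q < n \<and> j \<le> length (gates_on U q)}"

definition wire_qubit :: "nat \<times> nat \<Rightarrow> nat" where
  "wire_qubit w = fst w"

text \<open>Number of gates preceding wire w in the topological order given by the sequence.\<close>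
definition wire_pos :: "gate list \<Rightarrow> nat \<times> nat \<Rightarrow> nat" where
  "wire_pos U w = (if snd w = 0 then 0 else gates_on U (fst w) ! (snd w - 1) + 1)"

text \<open>adj(A_w) P A_w where A_w = G_k \<cdots> G_1 is the product of the first k = wire_pos gates:
  equals gheis G_1 (gheis G_2 (\<dots> (gheis G_k P))).\<close>
definition heis_prefix :: "gate list \<Rightarrow> nat \<Rightarrow> pauli \<Rightarrow> pauli" where
  "heis_prefix U k P = foldr gheis (take k U) P"

definition back_prop :: "gate list \<Rightarrow> pauli1 \<Rightarrow> nat \<times> nat \<Rightarrow> pauli" where
  "back_prop U a w = (if a = PI then pid
                      else heis_prefix U (wire_pos U w) (psingle (wire_qubit w) a))"

definition xbit :: "pauli1 \<Rightarrow> bit" where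
  "xbit a = (if a = PX \<or> a = PY then 1 else 0)"
definition zbit :: "pauli1 \<Rightarrow> bit" where
  "zbit a = (if a = PZ \<or> a = PY then 1 else 0)"

definition encode :: "nat \<Rightarrow> pauli \<Rightarrow> bit vec" where
  "encode n p = vec (2 * n) (\<lambda>i. if i < n then xbit (snd p i) else zbit (snd p (i - n)))"

definition nontriv_paulis :: "pauli1 list" where
  "nontriv_paulis = [PX, PY, PZ]"

text \<open>Back-propagator matrix of L: row 3*i + t is the encoding of B(P_t, w_i), where
  w_0, w_1, ... enumerates L in increasing order and (P_0,P_1,P_2) = (X,Y,Z).\<close>
definition back_prop_matrix :: "nat \<Rightarrow> gate list \<Rightarrow> (nat \<times> nat) set \<Rightarrow> bit mat" where
  "back_prop_matrix n U L =
     mat (3 * card L) (2 * n)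
       (\<lambda>(i, j). encode n (back_prop U (nontriv_paulis ! (i mod 3))
                                        (sorted_list_of_set L ! (i div 3))) $ j)"

definition gen_matrix :: "nat \<Rightarrow> pauli list \<Rightarrow> bit mat" where
  "gen_matrix n gs = mat (length gs) (2 * n) (\<lambda>(i, j). encode n (gs ! i) $ j)"

definition kernel_basis_cols :: "bit mat \<Rightarrow> bit mat \<Rightarrow> bool" where
  "kernel_basis_cols T N \<longleftrightarrow>
     dim_row N = dim_col T \<and>
     (\<forall>c \<in> set (cols N). T *\<^sub>v c = 0\<^sub>v (dim_row T)) \<and>
     (\<forall>a \<in> carrier_vec (dim_col N). N *\<^sub>v a = 0\<^sub>v (dim_row N) \<longrightarrow> a = 0\<^sub>v (dim_col N)) \<and>
     (\<forall>v \<in> carrier_vec (dim_col T). T *\<^sub>v v = 0\<^sub>v (dim_row T) \<longrightarrow>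
        (\<exists>a \<in> carrier_vec (dim_col N). v = N *\<^sub>v a))"

definition rank_F2 :: "bit mat \<Rightarrow> nat" where
  "rank_F2 A = vec_space.rank (dim_row A) A"

inductive_set generated_group :: "nat \<Rightarrow> pauli set \<Rightarrow> pauli set" for n G where
  gen_id: "pid \<in> generated_group n G"
| gen_base: "g \<in> G \<Longrightarrow> g \<in> generated_group n G"
| gen_mul: "a \<in> generated_group n G \<Longrightarrow> b \<in> generated_group n G \<Longrightarrow> pmul n a b \<in> generated_group n G"

definition abelian_paulis :: "nat \<Rightarrow> pauli set \<Rightarrow> bool" where
  "abelian_paulis n S \<longleftrightarrow> (\<forall>a\<in>S. \<forall>b\<in>S. pmul n a b = pmul n b a)"

definition stabilizer_group_gen :: "nat \<Rightarrow> pauli set \<Rightarrow> pauli list \<Rightarrow> bool" where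
  "stabilizer_group_gen n S gs \<longleftrightarrow>
     (\<forall>g\<in>set gs. is_pauli n g) \<and> S = generated_group n (set gs) \<and>
     abelian_paulis n S \<and> pscalar 2 \<notin> S"

definition prod_paulis :: "nat \<Rightarrow> pauli list \<Rightarrow> pauli" where
  "prod_paulis n ps = foldr (pmul n) ps pid"

definition assignment_product :: "nat \<Rightarrow> gate list \<Rightarrow> (nat \<times> nat) set \<Rightarrow> (nat \<times> nat \<Rightarrow> pauli1) \<Rightarrow> pauli" where
  "assignment_product n U L P = prod_paulis n (map (\<lambda>w. back_prop U (P w) w) (sorted_list_of_set L))"

definition phase_closure :: "nat \<Rightarrow> pauli set \<Rightarrow> pauli set" where
  "phase_closure n S = {pmul n (pscalar k) s | k s. k < 4 \<and> s \<in> S}"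

end

(*
  Encode Paulis up to phase by their symplectic vectors in F_2^2n. A Pauli lies in the phase
  closure of S iff its encoding lies in the encoding of S, which is the row space of T. A
  character sum gives |C| |C^perp| = 2^m for every subspace C of F_2^m, hence C^perp^perp = C, and
  the row space of T is (ker T)^perp = (col N)^perp.

  Back-propagation is linear on encodings and B(Y,w) = B(X,w) + B(Z,w), so the encoding of the
  product is the sum over w of x_w B(X,w) + z_w B(Z,w), where (x_w, z_w) are the bits of P_w. The
  condition says that these 2|L| bits are orthogonal to the X and Z rows of B N a for every a.
  Since the Y rows are sums of the X and Z rows, dropping them is injective on the column space of
  B N, so the admissible assignments form the orthogonal complement of a subspace with 2^rk
  elements in F_2^(2|L|).
*)
theory Submission
  imports Defs "HOL-Library.Disjoint_Sets"
begin

section \<open>Linear algebra over GF(2)\<close>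

lemma UNIV_bit: "(UNIV :: bit set) = {0, 1}"
  using bit.exhaust by auto

lemma finite_UNIV_bit: "finite (UNIV :: bit set)"
  unfolding UNIV_bit by simp

lemma card_UNIV_bit: "card (UNIV :: bit set) = 2"
  unfolding UNIV_bit by simp

lemma card_carrier_vec_bit: "card (carrier_vec m :: bit vec set) = 2 ^ m"
proof -
  let ?lists = "{xs :: bit list. set xs \<subseteq> UNIV \<and> length xs = m}"
  have "bij_betw list_of_vec (carrier_vec m) ?lists"
  proof (rule bij_betwI[where g = vec_of_list])
    show "list_of_vec \<in> carrier_vec m \<rightarrow> ?lists"
      by auto
    show "vec_of_list \<in> ?lists \<rightarrow> carrier_vec m"
      by (intro Pi_I carrier_vecI) simp
    show "vec_of_list (list_of_vec v) = v" if "v \<in> carrier_vec m" for v :: "bit vec"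
      by (rule vec_list)
    show "list_of_vec (vec_of_list xs) = xs" if "xs \<in> ?lists" for xs
      by (rule list_vec)
  qed
  then have "card (carrier_vec m :: bit vec set) = card ?lists"
    by (rule bij_betw_same_card)
  also have "\<dots> = 2 ^ m"
    unfolding card_lists_length_eq[OF finite_UNIV_bit] card_UNIV_bit ..
  finally show ?thesis .
qed

lemma finite_carrier_vec_bit [simp]: "finite (carrier_vec m :: bit vec set)"
  by (rule card_ge_0_finite) (simp add: card_carrier_vec_bit)

lemma sum_lessThan_double:
  fixes f :: "nat \<Rightarrow> 'a :: comm_monoid_add"
  shows "(\<Sum>j<2 * l. f j) = (\<Sum>i<l. f (2 * i) + f (2 * i + 1))"
  by (induction l) (simp_all add: add.assoc)

lemma card_preimage_bij_betw:
  assumes "bij_betw f A B" "X \<subseteq> B"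
  shows "card {x \<in> A. f x \<in> X} = card X"
proof -
  have image: "f ` {x \<in> A. f x \<in> X} = X"
    using assms unfolding bij_betw_def by blast
  have "bij_betw f {x \<in> A. f x \<in> X} X"
    by (rule bij_betw_subset[OF assms(1) _ image]) blast
  then show ?thesis
    by (rule bij_betw_same_card)
qed

context vectorspace
begin

lemma span_maximal_lin_indpt:
  assumes T: "T \<subseteq> carrier V" and max: "maximal S (\<lambda>U. U \<subseteq> T \<and> lin_indpt U)"
  shows "span S = span T"
proof
  have ST: "S \<subseteq> T" and S: "lin_indpt S" using max unfolding maximal_def by auto
  then show "span S \<subseteq> span T" by (intro span_is_monotone)
  have SV: "S \<subseteq> carrier V" using ST T by auto
  have "T \<subseteq> span S"
  proof
    fix v assume v: "v \<in> T"
    show "v \<in> span S"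
    proof (cases "v \<in> S")
      case True
      then show ?thesis using in_own_span[OF SV] by auto
    next
      case False
      have "lin_dep (S \<union> {v})"
      proof (rule ccontr)
        assume "\<not> lin_dep (S \<union> {v})"
        then have "S \<union> {v} = S" using max v ST unfolding maximal_def by blast
        then show False using False by blast
      qed
      then show ?thesis using lin_dep_iff_in_span[OF SV S] v T False by blast
    qed
  qed
  then show "span T \<subseteq> span S" using span_is_subset span_is_submodule[OF SV] by blast
qed

lemma card_span_lin_indpt:
  assumes S: "finite S" "S \<subseteq> carrier V" "lin_indpt S"
  shows "card (span S) = card (carrier K) ^ card S"
proof -
  have span_eq: "span S = (\<lambda>a. lincomb a S) ` (S \<rightarrow>\<^sub>E carrier K)"
    unfolding finite_span[OF S(1,2)]
  proof (intro equalityI subsetI)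
    fix x assume "x \<in> {lincomb a S |a. a \<in> S \<rightarrow> carrier K}"
    then obtain a where a: "a \<in> S \<rightarrow> carrier K" and x: "x = lincomb a S" by blast
    have "lincomb (restrict a S) S = lincomb a S"
      using a S by (intro lincomb_cong) auto
    moreover have "restrict a S \<in> S \<rightarrow>\<^sub>E carrier K"
      using a by simp
    ultimately show "x \<in> (\<lambda>a. lincomb a S) ` (S \<rightarrow>\<^sub>E carrier K)"
      unfolding x by (metis image_eqI)
  qed (auto simp: PiE_iff)
  have "inj_on (\<lambda>a. lincomb a S) (S \<rightarrow>\<^sub>E carrier K)"
  proof (rule inj_onI)
    fix a b assume a: "a \<in> S \<rightarrow>\<^sub>E carrier K" and b: "b \<in> S \<rightarrow>\<^sub>E carrier K"
      and eq: "lincomb a S = lincomb b S"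
    have aK: "a \<in> S \<rightarrow> carrier K" and bK: "b \<in> S \<rightarrow> carrier K"
      using a b unfolding PiE_def by blast+
    have "lincomb (\<lambda>v. a v \<ominus>\<^bsub>K\<^esub> b v) S = lincomb a S \<ominus>\<^bsub>V\<^esub> lincomb b S"
      by (rule lincomb_diff[OF S(1,2) aK bK])
    also have "\<dots> = \<zero>\<^bsub>V\<^esub>"
      unfolding eq using lincomb_closed[OF S(2) bK] by simp
    finally have zero: "lincomb (\<lambda>v. a v \<ominus>\<^bsub>K\<^esub> b v) S = \<zero>\<^bsub>V\<^esub>" .
    have "(\<lambda>v. a v \<ominus>\<^bsub>K\<^esub> b v) \<in> S \<rightarrow> carrier K"
      using aK bK by auto
    from not_lindepD[OF S(3) S(1) subset_refl this zero]
    have "(\<lambda>v. a v \<ominus>\<^bsub>K\<^esub> b v) \<in> S \<rightarrow> {\<zero>\<^bsub>K\<^esub>}" .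
    show "a = b"
    proof (rule PiE_ext[OF a b])
      fix v assume v: "v \<in> S"
      with \<open>(\<lambda>v. a v \<ominus>\<^bsub>K\<^esub> b v) \<in> S \<rightarrow> {\<zero>\<^bsub>K\<^esub>}\<close>
      have "a v \<ominus>\<^bsub>K\<^esub> b v = \<zero>\<^bsub>K\<^esub>" by auto
      moreover have "a v \<in> carrier K" "b v \<in> carrier K"
        using aK bK v by auto
      ultimately show "a v = b v" by simp
    qed
  qed
  then have "card (span S) = card (S \<rightarrow>\<^sub>E carrier K)"
    unfolding span_eq by (rule card_image)
  also have "\<dots> = card (carrier K) ^ card S"
    by (simp add: card_PiE S(1))
  finally show ?thesis .
qed

end

lemma card_mult_mat_vec_image_bit:
  fixes A :: "bit mat"
  assumes A: "A \<in> carrier_mat m k"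
  shows "card ((\<lambda>x. A *\<^sub>v x) ` carrier_vec k) = 2 ^ rank_F2 A"
proof -
  interpret vec_space "TYPE(bit)" m .
  have cols: "set (cols A) \<subseteq> carrier_vec m"
    using A cols_dim by blast
  have "lin_indpt {}"
    unfolding lin_dep_def by blast
  then obtain S where "finite S" and max: "maximal S (\<lambda>T. T \<subseteq> set (cols A) \<and> lin_indpt T)"
    using maximal_exists_superset[of "set (cols A)" "\<lambda>T. T \<subseteq> set (cols A) \<and> lin_indpt T" "{}"]
    by blast
  then have S: "S \<subseteq> carrier_vec m" "lin_indpt S"
    using cols unfolding maximal_def by auto
  have "span S = span (set (cols A))"
    by (rule span_maximal_lin_indpt) (use cols max in simp_all)
  moreover have "(\<lambda>x. A *\<^sub>v x) ` carrier_vec k = col_space A"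
    using col_space_eq[OF A] A by auto
  ultimately have "card ((\<lambda>x. A *\<^sub>v x) ` carrier_vec k) = card (span S)"
    unfolding col_space_def by simp
  also have "\<dots> = 2 ^ card S"
    using card_span_lin_indpt[OF \<open>finite S\<close> _ S(2)] S(1) card_UNIV_bit
    by (simp add: class_ring_simps)
  also have "card S = rank_F2 A"
    using rank_card_indpt[OF A max] A unfolding rank_F2_def by simp
  finally show ?thesis .
qed

lemma add_self_vec_bit:
  fixes u :: "bit vec"
  assumes "u \<in> carrier_vec m"
  shows "u + u = 0\<^sub>v m"
proof -
  have "b + b = 0" for b :: bit
    by (cases b) simp_all
  then show ?thesis
    using assms by (intro eq_vecI) simp_all
qed

lemma add_add_self_vec_bit:
  fixes u :: "bit vec"
  assumes "u \<in> carrier_vec m" "v \<in> carrier_vec m"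
  shows "u + v + v = u"
  using assms by (simp add: assoc_add_vec[of u m v v] add_self_vec_bit)

definition subspace_F2 :: "nat \<Rightarrow> bit vec set \<Rightarrow> bool" where
  "subspace_F2 m C \<longleftrightarrow> C \<subseteq> carrier_vec m \<and> C \<noteq> {} \<and> (\<forall>c\<in>C. \<forall>d\<in>C. c + d \<in> C)"

lemma zero_mem_subspace_F2:
  assumes "subspace_F2 m C"
  shows "0\<^sub>v m \<in> C"
proof -
  obtain c where c: "c \<in> C"
    using assms unfolding subspace_F2_def by blast
  then have "c + c \<in> C" "c \<in> carrier_vec m"
    using assms unfolding subspace_F2_def by blast+
  then show ?thesis
    using add_self_vec_bit by metis
qed

lemma finite_subspace_F2: "subspace_F2 m C \<Longrightarrow> finite C"
  unfolding subspace_F2_def using finite_subset finite_carrier_vec_bit by blast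

lemma card_subspace_F2_pos: "subspace_F2 m C \<Longrightarrow> card C > 0"
  using finite_subspace_F2[of m C] unfolding subspace_F2_def card_gt_0_iff by blast

lemma subspace_F2_carrier_vec: "subspace_F2 m (carrier_vec m)"
  unfolding subspace_F2_def by (auto simp: ex_in_conv[symmetric] intro: zero_carrier_vec)

lemma subspace_F2_image:
  assumes C: "subspace_F2 m C" and f: "f ` C \<subseteq> carrier_vec m'"
    and add: "\<And>c d. c \<in> C \<Longrightarrow> d \<in> C \<Longrightarrow> f (c + d) = f c + f d"
  shows "subspace_F2 m' (f ` C)"
  unfolding subspace_F2_def
proof (intro conjI ballI)
  fix x y assume "x \<in> f ` C" "y \<in> f ` C"
  then obtain c d where "c \<in> C" "d \<in> C" "x = f c" "y = f d"
    by blast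
  then show "x + y \<in> f ` C"
    using C add unfolding subspace_F2_def by (metis image_eqI)
qed (use C f in \<open>auto simp: subspace_F2_def\<close>)

lemma subspace_F2_mult_mat_vec_image:
  fixes A :: "bit mat"
  assumes A: "A \<in> carrier_mat m k"
  shows "subspace_F2 m ((\<lambda>x. A *\<^sub>v x) ` carrier_vec k)"
  by (rule subspace_F2_image[OF subspace_F2_carrier_vec])
    (use A in \<open>auto simp: mult_add_distrib_mat_vec\<close>)

definition orth_compl :: "nat \<Rightarrow> bit vec set \<Rightarrow> bit vec set" where
  "orth_compl m C = {u \<in> carrier_vec m. \<forall>c\<in>C. u \<bullet> c = 0}"

definition sign_bit :: "bit \<Rightarrow> int" where
  "sign_bit b = (if b = 0 then 1 else -1)"

lemma sign_bit_add_one: "sign_bit (b + 1) + sign_bit b = 0"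
  by (cases b) (simp_all add: sign_bit_def)

lemma sum_sign_bit_scalar_prod_carrier:
  fixes c :: "bit vec"
  assumes c: "c \<in> carrier_vec m"
  shows "(\<Sum>u\<in>carrier_vec m. sign_bit (u \<bullet> c)) = (if c = 0\<^sub>v m then 2 ^ m else 0)"
proof (cases "c = 0\<^sub>v m")
  case True
  have "(\<Sum>u\<in>carrier_vec m. sign_bit (u \<bullet> c)) = (\<Sum>u \<in> (carrier_vec m :: bit vec set). 1 :: int)"
    by (intro sum.cong) (simp_all add: True sign_bit_def)
  then show ?thesis
    using True by (simp add: card_carrier_vec_bit)
next
  case False
  then obtain j where j: "j < m" "c $ j = 1"
    using c by (metis bit_not_zero_iff carrier_vecD eq_vecI index_zero_vec)
  let ?flip = "\<lambda>u. u + unit_vec m j"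
  have "(\<Sum>u\<in>carrier_vec m. sign_bit (u \<bullet> c)) = 0"
  proof (rule sum_involution_eq_0[where h = ?flip])
    fix u :: "bit vec" assume u: "u \<in> carrier_vec m"
    have "?flip u \<bullet> c = u \<bullet> c + 1"
      using add_scalar_prod_distrib[OF u _ c] scalar_prod_left_unit[OF c j(1)] j(2) by simp
    then show "sign_bit (?flip u \<bullet> c) + sign_bit (u \<bullet> c) = 0"
      by (simp only: sign_bit_add_one)
    show "?flip u \<in> carrier_vec m"
      using u by simp
    show "?flip (?flip u) = u"
      using add_add_self_vec_bit[OF u unit_vec_carrier] .
    show "?flip u \<noteq> u"
    proof
      assume "?flip u = u"
      then have "(?flip u) $ j = u $ j" by simp
      then show False using u j(1) by (cases "u $ j") simp_all
    qed
  qed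
  then show ?thesis
    using False by simp
qed

lemma sum_sign_bit_scalar_prod_subspace:
  assumes C: "subspace_F2 m C" and u: "u \<in> carrier_vec m"
  shows "(\<Sum>c\<in>C. sign_bit (u \<bullet> c)) = (if u \<in> orth_compl m C then int (card C) else 0)"
proof (cases "u \<in> orth_compl m C")
  case True
  then have "(\<Sum>c\<in>C. sign_bit (u \<bullet> c)) = (\<Sum>c\<in>C. 1)"
    by (intro sum.cong) (simp_all add: orth_compl_def sign_bit_def)
  then show ?thesis
    using True by simp
next
  case False
  then obtain c0 where c0: "c0 \<in> C" "u \<bullet> c0 = 1"
    using u unfolding orth_compl_def by auto
  have CV: "C \<subseteq> carrier_vec m" and Cadd: "\<And>c d. c \<in> C \<Longrightarrow> d \<in> C \<Longrightarrow> c + d \<in> C"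
    using C unfolding subspace_F2_def by auto
  have c0V: "c0 \<in> carrier_vec m" using c0(1) CV by auto
  let ?shift = "\<lambda>c. c + c0"
  have "(\<Sum>c\<in>C. sign_bit (u \<bullet> c)) = 0"
  proof (rule sum_involution_eq_0[where h = ?shift])
    fix c assume c: "c \<in> C"
    then have cV: "c \<in> carrier_vec m" using CV by auto
    have "u \<bullet> ?shift c = u \<bullet> c + 1"
      using scalar_prod_add_distrib[OF u cV c0V] c0(2) by simp
    then show "sign_bit (u \<bullet> ?shift c) + sign_bit (u \<bullet> c) = 0"
      by (simp only: sign_bit_add_one)
    show "?shift c \<in> C"
      using Cadd[OF c c0(1)] .
    show "?shift (?shift c) = c"
      using add_add_self_vec_bit[OF cV c0V] .
    show "?shift c \<noteq> c"
    proof
      assume "?shift c = c"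
      then have "u \<bullet> ?shift c = u \<bullet> c" by simp
      with \<open>u \<bullet> ?shift c = u \<bullet> c + 1\<close> show False
        by (cases "u \<bullet> c") simp_all
    qed
  qed
  then show ?thesis
    using False by simp
qed

(* Double counting of the character sum of (-1)^(u \<bullet> c) over u \<in> F_2^m and c \<in> C. *)
lemma card_mult_card_orth_compl:
  assumes C: "subspace_F2 m C"
  shows "card C * card (orth_compl m C) = 2 ^ m"
proof -
  let ?V = "carrier_vec m :: bit vec set"
  have CV: "C \<subseteq> ?V"
    using C unfolding subspace_F2_def by auto
  have C0: "0\<^sub>v m \<in> C"
    using C by (rule zero_mem_subspace_F2)
  have finC: "finite C"
    using C by (rule finite_subspace_F2)
  have "(2 :: int) ^ m = (\<Sum>c\<in>C. if c = 0\<^sub>v m then 2 ^ m else 0)"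
    using finC C0 by (simp add: sum.delta)
  also have "\<dots> = (\<Sum>c\<in>C. \<Sum>u\<in>?V. sign_bit (u \<bullet> c))"
  proof (rule sum.cong[OF refl])
    fix c assume "c \<in> C"
    then have "c \<in> ?V" using CV by blast
    then show "(if c = 0\<^sub>v m then 2 ^ m else 0) = (\<Sum>u\<in>?V. sign_bit (u \<bullet> c))"
      by (rule sum_sign_bit_scalar_prod_carrier[symmetric])
  qed
  also have "\<dots> = (\<Sum>u\<in>?V. \<Sum>c\<in>C. sign_bit (u \<bullet> c))"
    by (rule sum.swap)
  also have "\<dots> = (\<Sum>u\<in>?V. if u \<in> orth_compl m C then int (card C) else 0)"
    by (intro sum.cong) (simp_all add: sum_sign_bit_scalar_prod_subspace[OF C])
  also have "\<dots> = int (card C) * int (card (?V \<inter> orth_compl m C))"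
    by (simp add: sum.If_cases)
  also have "?V \<inter> orth_compl m C = orth_compl m C"
    by (auto simp: orth_compl_def)
  finally show ?thesis
    by (metis of_nat_eq_iff of_nat_mult of_nat_numeral of_nat_power)
qed

lemma subspace_F2_orth_compl:
  assumes C: "C \<subseteq> carrier_vec m"
  shows "subspace_F2 m (orth_compl m C)"
proof -
  have "0\<^sub>v m \<in> orth_compl m C"
    using C by (auto simp: orth_compl_def)
  moreover have "u + v \<in> orth_compl m C" if "u \<in> orth_compl m C" "v \<in> orth_compl m C" for u v
    using that C add_scalar_prod_distrib[of u m v] by (fastforce simp: orth_compl_def)
  moreover have "orth_compl m C \<subseteq> carrier_vec m"
    by (auto simp: orth_compl_def)
  ultimately show ?thesis
    unfolding subspace_F2_def by blast
qed

lemma orth_compl_orth_compl: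
  assumes C: "subspace_F2 m C"
  shows "orth_compl m (orth_compl m C) = C"
proof -
  have CV: "C \<subseteq> carrier_vec m"
    using C unfolding subspace_F2_def by blast
  have D: "subspace_F2 m (orth_compl m C)"
    using CV by (rule subspace_F2_orth_compl)
  have sub: "C \<subseteq> orth_compl m (orth_compl m C)"
  proof
    fix c assume c: "c \<in> C"
    have "c \<bullet> u = 0" if "u \<in> orth_compl m C" for u
      using that c CV comm_scalar_prod[of c m u] unfolding orth_compl_def by auto
    then show "c \<in> orth_compl m (orth_compl m C)"
      using c CV unfolding orth_compl_def by blast
  qed
  have "card (orth_compl m C) * card C = card (orth_compl m C) * card (orth_compl m (orth_compl m C))"
    using card_mult_card_orth_compl[OF C] card_mult_card_orth_compl[OF D] by (simp add: mult.commute)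
  moreover have "card (orth_compl m C) \<noteq> 0"
    using card_subspace_F2_pos[OF D] by simp
  ultimately have "card C = card (orth_compl m (orth_compl m C))"
    by simp
  moreover have "finite (orth_compl m (orth_compl m C))"
    by (rule finite_subspace_F2[OF subspace_F2_orth_compl]) (auto simp: orth_compl_def)
  ultimately show ?thesis
    using card_subset_eq[OF _ sub] by simp
qed

lemma card_orth_compl:
  assumes C: "subspace_F2 m C" and card: "card C = 2 ^ r"
  shows "card (orth_compl m C) = 2 ^ (m - r)"
proof -
  have prod: "2 ^ r * card (orth_compl m C) = 2 ^ m"
    using card_mult_card_orth_compl[OF C] card by simp
  then have "card (orth_compl m C) \<noteq> 0"
    by (intro notI) simp
  have "2 ^ r dvd (2 :: nat) ^ m"
    using prod by (metis dvdI)
  then have "2 ^ r \<le> (2 :: nat) ^ m"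
    by (rule dvd_imp_le) simp
  then have "2 ^ m = 2 ^ r * (2 :: nat) ^ (m - r)"
    by (simp add: power_add[symmetric])
  with prod show ?thesis
    by simp
qed

section \<open>Binary encoding of Pauli operators\<close>

lemma xbit_mult1: "xbit (snd (mult1 a b)) = xbit a + xbit b"
  by (cases a; cases b) (simp_all add: xbit_def)

lemma zbit_mult1: "zbit (snd (mult1 a b)) = zbit a + zbit b"
  by (cases a; cases b) (simp_all add: zbit_def)

lemma pauli1_eqI: "xbit a = xbit b \<Longrightarrow> zbit a = zbit b \<Longrightarrow> a = b"
  by (cases a; cases b) (simp_all add: xbit_def zbit_def)

lemma card_UNIV_pauli1: "card (UNIV :: pauli1 set) = 4"
proof -
  have UNIV_pauli1: "(UNIV :: pauli1 set) = {PI, PX, PY, PZ}"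
    using pauli1.exhaust by blast
  show ?thesis
    unfolding UNIV_pauli1 by simp
qed

lemma encode_carrier [simp]: "encode n p \<in> carrier_vec (2 * n)"
  by (simp add: encode_def)

lemma encode_pmul: "encode n (pmul n p p') = encode n p + encode n p'"
  by (rule eq_vecI) (auto simp: encode_def pmul_def xbit_mult1 zbit_mult1)

lemma encode_pscalar: "encode n (pscalar k) = 0\<^sub>v (2 * n)"
  by (rule eq_vecI) (simp_all add: encode_def pscalar_def xbit_def zbit_def)

lemma encode_pid: "encode n pid = 0\<^sub>v (2 * n)"
  by (simp add: pid_def encode_pscalar)

lemma is_pauli_pmul: "is_pauli n (pmul n p p')"
  by (simp add: is_pauli_def pmul_def)

lemma is_pauli_pscalar: "is_pauli n (pscalar k)"
  by (simp add: is_pauli_def pscalar_def)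

lemma is_pauli_psingle: "q < n \<Longrightarrow> is_pauli n (psingle q a)"
  by (simp add: is_pauli_def psingle_def)

lemma is_pauli_prod_paulis: "is_pauli n (prod_paulis n ps)"
  by (cases ps) (simp_all add: prod_paulis_def is_pauli_pmul pid_def is_pauli_pscalar)

lemma encode_prod_paulis_scalar_prod:
  assumes y: "y \<in> carrier_vec (2 * n)"
  shows "encode n (prod_paulis n ps) \<bullet> y = (\<Sum>p\<leftarrow>ps. encode n p \<bullet> y)"
proof (induction ps)
  case Nil
  then show ?case using y by (simp add: prod_paulis_def encode_pid)
next
  case (Cons p ps)
  have "encode n (prod_paulis n (p # ps)) = encode n p + encode n (prod_paulis n ps)"
    by (simp add: prod_paulis_def encode_pmul)
  then show ?case
    using Cons add_scalar_prod_distrib[OF encode_carrier encode_carrier y] by simp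
qed

lemma phase_closure_iff_encode:
  assumes p: "is_pauli n p"
  shows "p \<in> phase_closure n S \<longleftrightarrow> encode n p \<in> encode n ` S"
proof
  assume "p \<in> phase_closure n S"
  then obtain k s where "p = pmul n (pscalar k) s" "s \<in> S"
    unfolding phase_closure_def by auto
  then show "encode n p \<in> encode n ` S"
    by (simp add: encode_pmul encode_pscalar)
next
  assume "encode n p \<in> encode n ` S"
  then obtain s where s: "s \<in> S" "encode n s = encode n p"
    by auto
  have same_letters: "snd s q = snd p q" if "q < n" for q
  proof (rule pauli1_eqI)
    show "xbit (snd s q) = xbit (snd p q)"
      using arg_cong[OF s(2), of "\<lambda>v. v $ q"] that by (simp add: encode_def)
    show "zbit (snd s q) = zbit (snd p q)"
      using arg_cong[OF s(2), of "\<lambda>v. v $ (n + q)"] that by (simp add: encode_def)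
  qed
  define k where "k = (fst p + 3 * fst s) mod 4"
  have "pmul n (pscalar k) s = p"
  proof (rule prod_eqI)
    have "(k + fst s) mod 4 = (fst p + 4 * fst s) mod 4"
      unfolding k_def by (simp add: mod_add_left_eq)
    then show "fst (pmul n (pscalar k) s) = fst p"
      using p by (simp add: pmul_def pscalar_def is_pauli_def mod_add_left_eq)
    show "snd (pmul n (pscalar k) s) = snd p"
      using p by (auto simp: pmul_def pscalar_def same_letters is_pauli_def)
  qed
  moreover have "k < 4"
    unfolding k_def by simp
  ultimately show "p \<in> phase_closure n S"
    unfolding phase_closure_def using s(1) by blast
qed

section \<open>Stabilizer groups\<close>

lemma subspace_F2_encode_generated_group:
  "subspace_F2 (2 * n) (encode n ` generated_group n G)"
proof -
  have "encode n (pmul n a b) \<in> encode n ` generated_group n G"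
    if "a \<in> generated_group n G" "b \<in> generated_group n G" for a b
    using that generated_group.gen_mul by blast
  then have "\<forall>c\<in>encode n ` generated_group n G. \<forall>d\<in>encode n ` generated_group n G.
      c + d \<in> encode n ` generated_group n G"
    by (auto simp: encode_pmul[symmetric])
  moreover have "encode n pid \<in> encode n ` generated_group n G"
    using generated_group.gen_id by blast
  moreover have "encode n ` generated_group n G \<subseteq> carrier_vec (2 * n)"
    by auto
  ultimately show ?thesis
    unfolding subspace_F2_def by blast
qed

lemma orth_compl_encode_generated_group:
  "orth_compl (2 * n) (encode n ` generated_group n G) = orth_compl (2 * n) (encode n ` G)"
proof
  show "orth_compl (2 * n) (encode n ` generated_group n G) \<subseteq> orth_compl (2 * n) (encode n ` G)"
    unfolding orth_compl_def using generated_group.gen_base by blast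
  show "orth_compl (2 * n) (encode n ` G) \<subseteq> orth_compl (2 * n) (encode n ` generated_group n G)"
  proof
    fix u assume u: "u \<in> orth_compl (2 * n) (encode n ` G)"
    then have uV: "u \<in> carrier_vec (2 * n)"
      unfolding orth_compl_def by blast
    have "u \<bullet> encode n s = 0" if "s \<in> generated_group n G" for s
      using that
    proof (induction rule: generated_group.induct)
      case gen_id
      then show ?case using uV by (simp add: encode_pid)
    next
      case (gen_base g)
      then show ?case using u unfolding orth_compl_def by blast
    next
      case (gen_mul a b)
      then show ?case
        using uV by (simp add: encode_pmul scalar_prod_add_distrib[of u "2 * n"])
    qed
    then show "u \<in> orth_compl (2 * n) (encode n ` generated_group n G)"
      using uV unfolding orth_compl_def by blast
  qed
qed

lemma dim_row_gen_matrix [simp]: "dim_row (gen_matrix n gs) = length gs"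
  by (simp add: gen_matrix_def)

lemma row_gen_matrix: "i < length gs \<Longrightarrow> row (gen_matrix n gs) i = encode n (gs ! i)"
  by (rule eq_vecI) (simp_all add: gen_matrix_def encode_def)

lemma orth_compl_encode_set_eq_kernel:
  "orth_compl (2 * n) (encode n ` set gs)
     = {u \<in> carrier_vec (2 * n). gen_matrix n gs *\<^sub>v u = 0\<^sub>v (length gs)}"
proof -
  have "gen_matrix n gs *\<^sub>v u = 0\<^sub>v (length gs) \<longleftrightarrow> (\<forall>g\<in>set gs. u \<bullet> encode n g = 0)"
    if u: "u \<in> carrier_vec (2 * n)" for u
  proof -
    have "gen_matrix n gs *\<^sub>v u = 0\<^sub>v (length gs) \<longleftrightarrow> (\<forall>i<length gs. encode n (gs ! i) \<bullet> u = 0)"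
      by (auto simp: vec_eq_iff row_gen_matrix)
    also have "\<dots> \<longleftrightarrow> (\<forall>i<length gs. u \<bullet> encode n (gs ! i) = 0)"
      using comm_scalar_prod[OF encode_carrier u] by simp
    also have "\<dots> \<longleftrightarrow> (\<forall>g\<in>set gs. u \<bullet> encode n g = 0)"
      unfolding all_set_conv_all_nth ..
    finally show ?thesis .
  qed
  then show ?thesis
    unfolding orth_compl_def by auto
qed

lemma kernel_basis_colsD:
  assumes "kernel_basis_cols T N"
  shows "dim_row N = dim_col T"
    and "c \<in> set (cols N) \<Longrightarrow> T *\<^sub>v c = 0\<^sub>v (dim_row T)"
    and "v \<in> carrier_vec (dim_col T) \<Longrightarrow> T *\<^sub>v v = 0\<^sub>v (dim_row T) \<Longrightarrow>
         \<exists>a\<in>carrier_vec (dim_col N). v = N *\<^sub>v a"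
proof -
  note kb = assms[unfolded kernel_basis_cols_def]
  show "dim_row N = dim_col T"
    using kb by (rule conjunct1)
  show "T *\<^sub>v c = 0\<^sub>v (dim_row T)" if "c \<in> set (cols N)"
    using conjunct1[OF conjunct2[OF kb]] that by blast
  show "\<exists>a\<in>carrier_vec (dim_col N). v = N *\<^sub>v a"
    if "v \<in> carrier_vec (dim_col T)" "T *\<^sub>v v = 0\<^sub>v (dim_row T)"
    using conjunct2[OF conjunct2[OF conjunct2[OF kb]]] that by blast
qed

lemma kernel_basis_cols_gen_matrix_carrier:
  "kernel_basis_cols (gen_matrix n gs) N \<Longrightarrow> N \<in> carrier_mat (2 * n) (dim_col N)"
  by (rule carrier_matI) (simp_all add: kernel_basis_colsD(1) gen_matrix_def)

lemma kernel_basis_cols_kernel_eq: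
  assumes N: "kernel_basis_cols T N"
  shows "{v \<in> carrier_vec (dim_col T). T *\<^sub>v v = 0\<^sub>v (dim_row T)} = (\<lambda>a. N *\<^sub>v a) ` carrier_vec (dim_col N)"
proof
  show "{v \<in> carrier_vec (dim_col T). T *\<^sub>v v = 0\<^sub>v (dim_row T)} \<subseteq> (\<lambda>a. N *\<^sub>v a) ` carrier_vec (dim_col N)"
    using kernel_basis_colsD(3)[OF N] by blast
  have TN: "T * N = 0\<^sub>m (dim_row T) (dim_col N)"
  proof (rule eq_matI)
    fix i j assume i: "i < dim_row (0\<^sub>m (dim_row T) (dim_col N) :: bit mat)"
      and j: "j < dim_col (0\<^sub>m (dim_row T) (dim_col N) :: bit mat)"
    have "col N j \<in> set (cols N)"
      using j by (simp add: cols_def)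
    then have "(T *\<^sub>v col N j) $ i = 0"
      using kernel_basis_colsD(2)[OF N] i by simp
    then show "(T * N) $$ (i, j) = 0\<^sub>m (dim_row T) (dim_col N) $$ (i, j)"
      using i j by simp
  qed simp_all
  have T: "T \<in> carrier_mat (dim_row T) (dim_col T)"
    by (rule carrier_matI) simp_all
  have NT: "N \<in> carrier_mat (dim_col T) (dim_col N)"
    by (rule carrier_matI) (simp_all add: kernel_basis_colsD(1)[OF N])
  show "(\<lambda>a. N *\<^sub>v a) ` carrier_vec (dim_col N) \<subseteq> {v \<in> carrier_vec (dim_col T). T *\<^sub>v v = 0\<^sub>v (dim_row T)}"
  proof clarify
    fix a :: "bit vec" assume a: "a \<in> carrier_vec (dim_col N)"
    have "T *\<^sub>v (N *\<^sub>v a) = (T * N) *\<^sub>v a"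
      by (rule assoc_mult_mat_vec[OF T NT a, symmetric])
    also have "\<dots> = 0\<^sub>v (dim_row T)"
      unfolding TN using a by (intro eq_vecI) auto
    finally show "N *\<^sub>v a \<in> carrier_vec (dim_col T) \<and> T *\<^sub>v (N *\<^sub>v a) = 0\<^sub>v (dim_row T)"
      using mult_mat_vec_carrier[OF NT a] by blast
  qed
qed

lemma encode_stabilizer_group:
  assumes S: "stabilizer_group_gen n S gs" and N: "kernel_basis_cols (gen_matrix n gs) N"
  shows "encode n ` S = orth_compl (2 * n) ((\<lambda>a. N *\<^sub>v a) ` carrier_vec (dim_col N))"
proof -
  have S_gen: "S = generated_group n (set gs)"
    using S unfolding stabilizer_group_gen_def by blast
  have "orth_compl (2 * n) (encode n ` S) = (\<lambda>a. N *\<^sub>v a) ` carrier_vec (dim_col N)"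
    using kernel_basis_cols_kernel_eq[OF N]
    unfolding S_gen orth_compl_encode_generated_group orth_compl_encode_set_eq_kernel
    by (simp add: gen_matrix_def)
  then show ?thesis
    using orth_compl_orth_compl[OF subspace_F2_encode_generated_group] S_gen by metis
qed

lemma mem_phase_closure_iff:
  assumes "stabilizer_group_gen n S gs" "kernel_basis_cols (gen_matrix n gs) N" "is_pauli n p"
  shows "p \<in> phase_closure n S \<longleftrightarrow> (\<forall>a\<in>carrier_vec (dim_col N). encode n p \<bullet> (N *\<^sub>v a) = 0)"
  unfolding phase_closure_iff_encode[OF assms(3)] encode_stabilizer_group[OF assms(1,2)]
  by (auto simp: orth_compl_def)

section \<open>Back-propagators\<close>

lemma clifford_gate_is_pauli: "clifford_gate n g \<Longrightarrow> is_pauli n p \<Longrightarrow> is_pauli n (gheis g p)"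
  unfolding clifford_gate_def by (auto dest: bij_betw_apply)

lemma clifford_gate_pmul:
  "clifford_gate n g \<Longrightarrow> is_pauli n p \<Longrightarrow> is_pauli n p' \<Longrightarrow>
   gheis g (pmul n p p') = pmul n (gheis g p) (gheis g p')"
  unfolding clifford_gate_def by blast

lemma foldr_gheis_is_pauli:
  "\<forall>g\<in>set gs. clifford_gate n g \<Longrightarrow> is_pauli n p \<Longrightarrow> is_pauli n (foldr gheis gs p)"
  by (induction gs) (simp_all add: clifford_gate_is_pauli)

lemma foldr_gheis_pscalar:
  "\<forall>g\<in>set gs. clifford_gate n g \<Longrightarrow> foldr gheis gs (pscalar k) = pscalar k"
  by (induction gs) (simp_all add: clifford_gate_def)

lemma foldr_gheis_pmul:
  assumes "\<forall>g\<in>set gs. clifford_gate n g" "is_pauli n p" "is_pauli n p'"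
  shows "foldr gheis gs (pmul n p p') = pmul n (foldr gheis gs p) (foldr gheis gs p')"
  using assms
proof (induction gs)
  case (Cons g gs)
  then have "clifford_gate n g" "is_pauli n (foldr gheis gs p)" "is_pauli n (foldr gheis gs p')"
    by (simp_all add: foldr_gheis_is_pauli)
  with Cons show ?case
    by (simp add: clifford_gate_pmul)
qed simp

lemma psingle_PY:
  assumes q: "q < n"
  shows "psingle q PY = pmul n (pscalar 1) (pmul n (psingle q PX) (psingle q PZ))"
proof -
  have "(\<Sum>q'<n. fst (mult1 (if q' = q then PX else PI) (if q' = q then PZ else PI)))
      = (\<Sum>q'<n. if q' = q then 3 else 0)"
    by (rule sum.cong) simp_all
  also have "\<dots> = 3"
    using q by simp
  finally have "pmul n (psingle q PX) (psingle q PZ) = (3, \<lambda>q'. if q' = q then PY else PI)"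
    unfolding pmul_def psingle_def using q by (auto intro!: ext)
  then show ?thesis
    using q by (auto simp: pmul_def pscalar_def psingle_def intro!: ext)
qed

lemma encode_back_prop_PY:
  assumes U: "clifford_circuit n U" and q: "wire_qubit w < n"
  shows "encode n (back_prop U PY w) = encode n (back_prop U PX w) + encode n (back_prop U PZ w)"
proof -
  define gs where "gs = take (wire_pos U w) U"
  have gs: "\<forall>g\<in>set gs. clifford_gate n g"
    using U unfolding gs_def clifford_circuit_def by (meson in_set_takeD)
  have back_prop: "back_prop U a w = foldr gheis gs (psingle (wire_qubit w) a)" if "a \<noteq> PI" for a
    using that unfolding back_prop_def heis_prefix_def gs_def by simp
  have "back_prop U PY w = pmul n (pscalar 1) (pmul n (back_prop U PX w) (back_prop U PZ w))"
    unfolding back_prop[of PX, simplified] back_prop[of PY, simplified] back_prop[of PZ, simplified]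
      psingle_PY[OF q]
    by (simp add: foldr_gheis_pmul[OF gs] foldr_gheis_pscalar[OF gs] is_pauli_pscalar is_pauli_pmul
        is_pauli_psingle[OF q])
  then show ?thesis
    by (simp add: encode_pmul encode_pscalar)
qed

lemma encode_back_prop_scalar_prod:
  assumes "clifford_circuit n U" "wire_qubit w < n" "y \<in> carrier_vec (2 * n)"
  shows "encode n (back_prop U a w) \<bullet> y =
     xbit a * (encode n (back_prop U PX w) \<bullet> y) + zbit a * (encode n (back_prop U PZ w) \<bullet> y)"
proof (cases a)
  case PI
  then show ?thesis
    using assms(3) by (simp add: back_prop_def encode_pid xbit_def zbit_def)
next
  case PY
  then show ?thesis
    using assms by (simp add: xbit_def zbit_def encode_back_prop_PY add_scalar_prod_distrib[of _ "2 * n"])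
qed (simp_all add: xbit_def zbit_def)

lemma finite_wires: "finite (wires n U)"
proof (rule finite_subset)
  show "wires n U \<subseteq> {..<n} \<times> {..length U}"
  proof
    fix w assume "w \<in> wires n U"
    then obtain q j where w: "w = (q, j)" "q < n" "j \<le> length (gates_on U q)"
      unfolding wires_def by auto
    moreover have "length (gates_on U q) \<le> length U"
      unfolding gates_on_def using length_filter_le[of _ "[0..<length U]"] by simp
    ultimately show "w \<in> {..<n} \<times> {..length U}"
      by auto
  qed
qed simp

lemma back_prop_matrix_mult_vec_index:
  assumes "i < card L" "t < 3"
  shows "(back_prop_matrix n U L *\<^sub>v y) $ (3 * i + t)
           = encode n (back_prop U (nontriv_paulis ! t) (sorted_list_of_set L ! i)) \<bullet> y"
proof -
  have "(3 * i + t) mod 3 = t" "(3 * i + t) div 3 = i"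
    using assms(2) by presburger+
  moreover have "row (back_prop_matrix n U L) (3 * i + t)
      = encode n (back_prop U (nontriv_paulis ! ((3 * i + t) mod 3)) (sorted_list_of_set L ! ((3 * i + t) div 3)))"
    using assms by (intro eq_vecI) (simp_all add: back_prop_matrix_def encode_def)
  ultimately show ?thesis
    using assms by (simp add: back_prop_matrix_def)
qed

definition pauli_bits :: "'w list \<Rightarrow> ('w \<Rightarrow> pauli1) \<Rightarrow> bit vec" where
  "pauli_bits ws P =
     vec (2 * length ws) (\<lambda>j. if even j then xbit (P (ws ! (j div 2))) else zbit (P (ws ! (j div 2))))"

lemma pauli_bits_index:
  assumes "i < length ws"
  shows "pauli_bits ws P $ (2 * i) = xbit (P (ws ! i))" "pauli_bits ws P $ (2 * i + 1) = zbit (P (ws ! i))"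
  using assms by (simp_all add: pauli_bits_def)

lemma pauli_bits_carrier: "pauli_bits ws P \<in> carrier_vec (2 * length ws)"
  by (simp add: pauli_bits_def)

lemma bij_betw_pauli_bits:
  assumes "distinct ws"
  shows "bij_betw (pauli_bits ws) (set ws \<rightarrow>\<^sub>E UNIV) (carrier_vec (2 * length ws))"
proof -
  have inj: "inj_on (pauli_bits ws) (set ws \<rightarrow>\<^sub>E UNIV)"
  proof (rule inj_onI)
    fix P P' assume P: "P \<in> set ws \<rightarrow>\<^sub>E UNIV" and P': "P' \<in> set ws \<rightarrow>\<^sub>E UNIV"
      and eq: "pauli_bits ws P = pauli_bits ws P'"
    show "P = P'"
    proof (rule PiE_ext[OF P P'])
      fix w assume "w \<in> set ws"
      then obtain i where i: "i < length ws" "w = ws ! i"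
        by (metis in_set_conv_nth)
      show "P w = P' w"
      proof (rule pauli1_eqI)
        show "xbit (P w) = xbit (P' w)"
          using arg_cong[OF eq, of "\<lambda>v. v $ (2 * i)"] i by (simp add: pauli_bits_def)
        show "zbit (P w) = zbit (P' w)"
          using arg_cong[OF eq, of "\<lambda>v. v $ (2 * i + 1)"] i by (simp add: pauli_bits_def)
      qed
    qed
  qed
  have "card (pauli_bits ws ` (set ws \<rightarrow>\<^sub>E UNIV)) = card (carrier_vec (2 * length ws) :: bit vec set)"
    unfolding card_image[OF inj] card_PiE[OF finite_set] card_carrier_vec_bit
    using assms by (simp add: card_UNIV_pauli1 distinct_card power_mult)
  then have "pauli_bits ws ` (set ws \<rightarrow>\<^sub>E UNIV) = carrier_vec (2 * length ws)"
    using pauli_bits_carrier by (intro card_subset_eq) auto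
  with inj show ?thesis
    unfolding bij_betw_def ..
qed

(* Keeps the X and Z rows of every wire; the Y row is their sum. *)
definition drop_Y_rows :: "nat \<Rightarrow> bit vec \<Rightarrow> bit vec" where
  "drop_Y_rows l v = vec (2 * l) (\<lambda>j. v $ (3 * (j div 2) + (if even j then 0 else 2)))"

lemma dim_vec_drop_Y_rows [simp]: "dim_vec (drop_Y_rows l v) = 2 * l"
  by (simp add: drop_Y_rows_def)

lemma drop_Y_rows_index:
  assumes "i < l"
  shows "drop_Y_rows l v $ (2 * i) = v $ (3 * i)" "drop_Y_rows l v $ (2 * i + 1) = v $ (3 * i + 2)"
  using assms by (simp_all add: drop_Y_rows_def)

lemma drop_Y_rows_add:
  assumes "v \<in> carrier_vec (3 * l)" "w \<in> carrier_vec (3 * l)"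
  shows "drop_Y_rows l (v + w) = drop_Y_rows l v + drop_Y_rows l w"
proof (rule eq_vecI)
  fix j assume "j < dim_vec (drop_Y_rows l v + drop_Y_rows l w)"
  then have j: "j < 2 * l"
    by (simp add: drop_Y_rows_def)
  then have "j div 2 < l"
    by (simp add: div_less_iff_less_mult)
  then have "3 * (j div 2) + (if even j then 0 else 2) < 3 * l"
    by auto
  then show "drop_Y_rows l (v + w) $ j = (drop_Y_rows l v + drop_Y_rows l w) $ j"
    using assms j by (simp add: drop_Y_rows_def)
qed (simp add: drop_Y_rows_def)

lemma subspace_F2_drop_Y_rows:
  assumes C: "subspace_F2 (3 * l) C"
  shows "subspace_F2 (2 * l) (drop_Y_rows l ` C)"
proof (rule subspace_F2_image[OF C])
  show "drop_Y_rows l ` C \<subseteq> carrier_vec (2 * l)"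
    by (auto simp: drop_Y_rows_def)
  show "drop_Y_rows l (c + d) = drop_Y_rows l c + drop_Y_rows l d" if "c \<in> C" "d \<in> C" for c d
    using that C unfolding subspace_F2_def by (intro drop_Y_rows_add) blast+
qed

context
  fixes n :: nat and U :: "gate list" and L :: "(nat \<times> nat) set"
  assumes circuit: "clifford_circuit n U" and L_wires: "L \<subseteq> wires n U"
begin

lemma finite_wire_set: "finite L"
  using L_wires finite_wires by (rule finite_subset)

lemma wire_qubit_sorted_nth:
  assumes "i < card L"
  shows "wire_qubit (sorted_list_of_set L ! i) < n"
proof -
  have "sorted_list_of_set L ! i \<in> L"
    using assms finite_wire_set by (metis length_sorted_list_of_set nth_mem set_sorted_list_of_set)
  then show ?thesis
    using L_wires unfolding wires_def wire_qubit_def by auto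
qed

lemma back_prop_matrix_Y_row:
  assumes y: "y \<in> carrier_vec (2 * n)" and i: "i < card L"
  shows "(back_prop_matrix n U L *\<^sub>v y) $ (3 * i + 1)
           = (back_prop_matrix n U L *\<^sub>v y) $ (3 * i) + (back_prop_matrix n U L *\<^sub>v y) $ (3 * i + 2)"
  using back_prop_matrix_mult_vec_index[OF i, where t = 0 and y = y] back_prop_matrix_mult_vec_index[OF i, where t = 1 and y = y]
    back_prop_matrix_mult_vec_index[OF i, where t = 2 and y = y]
    encode_back_prop_scalar_prod[OF circuit wire_qubit_sorted_nth[OF i] y, of PY]
  by (simp add: nontriv_paulis_def xbit_def zbit_def)

lemma inj_on_drop_Y_rows:
  "inj_on (drop_Y_rows (card L)) ((\<lambda>y. back_prop_matrix n U L *\<^sub>v y) ` carrier_vec (2 * n))"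
proof (rule inj_onI, clarify)
  fix y y' :: "bit vec"
  assume y: "y \<in> carrier_vec (2 * n)" and y': "y' \<in> carrier_vec (2 * n)"
    and eq: "drop_Y_rows (card L) (back_prop_matrix n U L *\<^sub>v y)
           = drop_Y_rows (card L) (back_prop_matrix n U L *\<^sub>v y')"
  let ?v = "back_prop_matrix n U L *\<^sub>v y" and ?v' = "back_prop_matrix n U L *\<^sub>v y'"
  have X: "?v $ (3 * i) = ?v' $ (3 * i)" if "i < card L" for i
    using arg_cong[OF eq, of "\<lambda>v. v $ (2 * i)"] drop_Y_rows_index[OF that] by simp
  have Z: "?v $ (3 * i + 2) = ?v' $ (3 * i + 2)" if "i < card L" for i
    using arg_cong[OF eq, of "\<lambda>v. v $ (2 * i + 1)"] drop_Y_rows_index[OF that] by simp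
  have Y: "?v $ (3 * i + 1) = ?v' $ (3 * i + 1)" if "i < card L" for i
    using back_prop_matrix_Y_row[OF y that] back_prop_matrix_Y_row[OF y' that] X[OF that] Z[OF that]
    by simp
  have XYZ: "?v $ (3 * i + t) = ?v' $ (3 * i + t)" if i: "i < card L" and t: "t < 3" for i t
  proof -
    consider "t = 0" | "t = 1" | "t = 2"
      using t by linarith
    then show ?thesis
      using X[OF i] Y[OF i] Z[OF i] by cases simp_all
  qed
  show "?v = ?v'"
  proof (rule eq_vecI)
    show "dim_vec ?v = dim_vec ?v'"
      by (simp add: back_prop_matrix_def)
    fix k assume "k < dim_vec ?v'"
    then have "k div 3 < card L"
      by (simp add: back_prop_matrix_def)
    then show "?v $ k = ?v' $ k"
      using XYZ[of "k div 3" "k mod 3"] by simp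
  qed
qed

lemma encode_assignment_product_scalar_prod:
  assumes y: "y \<in> carrier_vec (2 * n)"
  shows "encode n (assignment_product n U L P) \<bullet> y
           = pauli_bits (sorted_list_of_set L) P \<bullet> drop_Y_rows (card L) (back_prop_matrix n U L *\<^sub>v y)"
proof -
  let ?ws = "sorted_list_of_set L" and ?v = "back_prop_matrix n U L *\<^sub>v y"
  let ?b = "pauli_bits ?ws P" and ?d = "drop_Y_rows (card L) ?v"
  have length_ws: "length ?ws = card L"
    using finite_wire_set by simp
  have "encode n (assignment_product n U L P) \<bullet> y = (\<Sum>w\<leftarrow>?ws. encode n (back_prop U (P w) w) \<bullet> y)"
    unfolding assignment_product_def encode_prod_paulis_scalar_prod[OF y] by (simp add: o_def)
  also have "\<dots> = (\<Sum>i<card L. encode n (back_prop U (P (?ws ! i)) (?ws ! i)) \<bullet> y)"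
    by (simp add: sum_list_sum_nth atLeast0LessThan length_ws)
  also have "\<dots> = (\<Sum>i<card L. ?b $ (2 * i) * ?d $ (2 * i) + ?b $ (2 * i + 1) * ?d $ (2 * i + 1))"
  proof (rule sum.cong[OF refl])
    fix i assume "i \<in> {..<card L}"
    then have i: "i < card L" by simp
    have "?b $ (2 * i) = xbit (P (?ws ! i))" "?b $ (2 * i + 1) = zbit (P (?ws ! i))"
      using pauli_bits_index[of i ?ws P] i length_ws by simp_all
    moreover have "?d $ (2 * i) = encode n (back_prop U PX (?ws ! i)) \<bullet> y"
      "?d $ (2 * i + 1) = encode n (back_prop U PZ (?ws ! i)) \<bullet> y"
      using back_prop_matrix_mult_vec_index[OF i, where t = 0 and y = y]
        back_prop_matrix_mult_vec_index[OF i, where t = 2 and y = y] drop_Y_rows_index[OF i]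
      by (simp_all add: nontriv_paulis_def)
    ultimately show "encode n (back_prop U (P (?ws ! i)) (?ws ! i)) \<bullet> y
        = ?b $ (2 * i) * ?d $ (2 * i) + ?b $ (2 * i + 1) * ?d $ (2 * i + 1)"
      using encode_back_prop_scalar_prod[OF circuit wire_qubit_sorted_nth[OF i] y, of "P (?ws ! i)"]
      by simp
  qed
  also have "\<dots> = (\<Sum>j<2 * card L. ?b $ j * ?d $ j)"
    by (rule sum_lessThan_double[symmetric])
  also have "\<dots> = ?b \<bullet> ?d"
    by (simp add: scalar_prod_def atLeast0LessThan)
  finally show ?thesis .
qed

lemma assignment_product_mem_phase_closure_iff:
  assumes S: "stabilizer_group_gen n S gs" and N: "kernel_basis_cols (gen_matrix n gs) N"
  shows "assignment_product n U L P \<in> phase_closure n S \<longleftrightarrow>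
    pauli_bits (sorted_list_of_set L) P \<in> orth_compl (2 * card L)
      (drop_Y_rows (card L) ` (\<lambda>a. (back_prop_matrix n U L * N) *\<^sub>v a) ` carrier_vec (dim_col N))"
proof -
  let ?B = "back_prop_matrix n U L" and ?b = "pauli_bits (sorted_list_of_set L) P"
  have N_carrier: "N \<in> carrier_mat (2 * n) (dim_col N)"
    using N by (rule kernel_basis_cols_gen_matrix_carrier)
  have B: "?B \<in> carrier_mat (3 * card L) (2 * n)"
    by (simp add: back_prop_matrix_def)
  have "is_pauli n (assignment_product n U L P)"
    unfolding assignment_product_def by (rule is_pauli_prod_paulis)
  then have "assignment_product n U L P \<in> phase_closure n S \<longleftrightarrow>
      (\<forall>a\<in>carrier_vec (dim_col N). encode n (assignment_product n U L P) \<bullet> (N *\<^sub>v a) = 0)"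
    by (rule mem_phase_closure_iff[OF S N])
  also have "\<dots> \<longleftrightarrow> (\<forall>a\<in>carrier_vec (dim_col N). ?b \<bullet> drop_Y_rows (card L) ((?B * N) *\<^sub>v a) = 0)"
    using encode_assignment_product_scalar_prod mult_mat_vec_carrier[OF N_carrier]
      assoc_mult_mat_vec[OF B N_carrier] by simp
  also have "\<dots> \<longleftrightarrow> ?b \<in> orth_compl (2 * card L) (drop_Y_rows (card L) ` (\<lambda>a. (?B * N) *\<^sub>v a) ` carrier_vec (dim_col N))"
    using pauli_bits_carrier[of "sorted_list_of_set L" P] finite_wire_set
    by (auto simp: orth_compl_def)
  finally show ?thesis .
qed

lemma card_drop_Y_rows_image:
  assumes N: "N \<in> carrier_mat (2 * n) k"
  shows "card (drop_Y_rows (card L) ` (\<lambda>a. (back_prop_matrix n U L * N) *\<^sub>v a) ` carrier_vec k)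
           = 2 ^ rank_F2 (back_prop_matrix n U L * N)"
proof -
  let ?B = "back_prop_matrix n U L"
  have B: "?B \<in> carrier_mat (3 * card L) (2 * n)"
    by (simp add: back_prop_matrix_def)
  have "(\<lambda>a. (?B * N) *\<^sub>v a) ` carrier_vec k \<subseteq> (\<lambda>y. ?B *\<^sub>v y) ` carrier_vec (2 * n)"
    using assoc_mult_mat_vec[OF B N] mult_mat_vec_carrier[OF N] by auto
  then have inj: "inj_on (drop_Y_rows (card L)) ((\<lambda>a. (?B * N) *\<^sub>v a) ` carrier_vec k)"
    by (rule inj_on_subset[OF inj_on_drop_Y_rows])
  have "?B * N \<in> carrier_mat (3 * card L) k"
    using B N by simp
  then show ?thesis
    unfolding card_image[OF inj] by (rule card_mult_mat_vec_image_bit)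
qed

end

theorem mainTheorem2:
  fixes n :: nat and U :: "gate list" and L :: "(nat \<times> nat) set"
    and S :: "pauli set" and gs :: "pauli list" and N :: "bit mat"
  assumes "clifford_circuit n U"
    and "L \<subseteq> wires n U"
    and "stabilizer_group_gen n S gs"
    and "kernel_basis_cols (gen_matrix n gs) N"
  shows "card {P \<in> L \<rightarrow>\<^sub>E UNIV. assignment_product n U L P \<in> phase_closure n S}
         = 2 ^ (2 * card L - rank_F2 (back_prop_matrix n U L * N))"
proof -
  let ?ws = "sorted_list_of_set L" and ?BN = "back_prop_matrix n U L * N"
  let ?C = "drop_Y_rows (card L) ` (\<lambda>a. ?BN *\<^sub>v a) ` carrier_vec (dim_col N)"
  have finite: "finite L"
    using assms(1,2) by (rule finite_wire_set)
  have N: "N \<in> carrier_mat (2 * n) (dim_col N)"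
    using assms(4) by (rule kernel_basis_cols_gen_matrix_carrier)
  have "back_prop_matrix n U L \<in> carrier_mat (3 * card L) (2 * n)"
    by (simp add: back_prop_matrix_def)
  from mult_carrier_mat[OF this N] have C: "subspace_F2 (2 * card L) ?C"
    by (intro subspace_F2_drop_Y_rows subspace_F2_mult_mat_vec_image)
  have "{P \<in> L \<rightarrow>\<^sub>E UNIV. assignment_product n U L P \<in> phase_closure n S}
      = {P \<in> set ?ws \<rightarrow>\<^sub>E UNIV. pauli_bits ?ws P \<in> orth_compl (2 * length ?ws) ?C}"
    using assignment_product_mem_phase_closure_iff[OF assms] finite by simp
  also have "card \<dots> = card (orth_compl (2 * length ?ws) ?C)"
    by (rule card_preimage_bij_betw[OF bij_betw_pauli_bits]) (auto simp: orth_compl_def)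
  also have "\<dots> = 2 ^ (2 * card L - rank_F2 ?BN)"
    unfolding length_sorted_list_of_set by (rule card_orth_compl[OF C card_drop_Y_rows_image[OF assms(1,2) N]])
  finally show ?thesis .
qed

end
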